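(* Let $(Y^*,Y,X,W)$ be random variables with $Y^*\in\{0,1\}$ (true, unobserved outcome), $Y\in\{0,1\}$ (observed, possibly misreported outcome), covariates $X\in\mathcal X$, and $W$ taking values in a finite set of real numbers $\mathcal W=\{w_1,\dots,w_l\}$. Write $p^*(x)=\Pr(Y^*=1\mid X=x)$, $p_W(x,w)=\Pr(Y=1\mid X=x,W=w)$, and $$\underline p_w(x,w)=\inf_{\tilde w\in\mathcal W,\ \tilde w\le w}p_W(x,\tilde w),\qquad \bar p_w(x,w)=\sup_{\tilde w\in\mathcal W,\ \tilde w\le w}p_W(x,\tilde w).$$ Assume: (i) (Exclusion) $\Pr(Y^*=1\mid X=x,W=w)=p^*(x)$ for all $x\in\mathcal X$, $w\in\mathcal W$; (ii) (Monotonicity) for all $x\in\mathcal X$, $y\in\{0,1\}$ and $w_1>w_2$ in $\mathcal W$, $\Pr(Y=1-y\mid Y^*=y,x,w_1)\le\Pr(Y=1-y\mid Y^*=y,x,w_2)$; (iii) (Degree of misreporting) $\Pr(Y=1\mid Y^*=0,x,w)+\Pr(Y=0\mid Y^*=1,x,w)\le 1$ for all $x\in\mathcal X$, $w\in\mathcal W$; (iv) (Boundary condition) $0<p_W(x,w)<1$ for all $x\in\mathcal X$, $w\in\mathcal W$. Then for every $x\in\mathcal X$, $p^*(x)\in[L_2(x),U_2(x)]$, where $$L_2(x)=\sup_{w\in\mathcal W}\left\{\frac{p_W(x,w)-\underline p_w(x,w)}{1-\underline p_w(x,w)}\right\},\qquad U_2(x)=\inf_{w\in\mathcal W}\left\{\frac{p_W(x,w)}{\bar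 p_w(x,w)}\right\}.$$ Moreover, when $W$ is binary (i.e. $\mathcal W$ has two elements), these bounds are sharp (no tighter bounds on $p^*(x)$ are implied by the assumptions and the distribution of the observed variables $(Y,X,W)$).
   Context: Conditioning on $x,w$ means conditioning on $X=x,W=w$. $W$ is an instrument that affects only the misreporting probabilities $\Pr(Y=1-y\mid Y^*=y,\cdot)$, not the true outcome. *)

theory Defs
  imports "HOL-Probability.Probability"
begin

text \<open>For each covariate value x, D x is the conditional joint distribution of
  (Y*, Y, W) given X = x, as a pmf on bool \<times> bool \<times> real
  (True encodes the value 1, False the value 0).  Since Y*, Y are binary and
  W takes values in a finite set, this is fully general.\<close>

type_synonym cdist = "(bool \<times> bool \<times> real) pmf"

definition cprob :: "'a pmf \<Rightarrow> ('a \<Rightarrow> bool) \<Rightarrow> ('a \<Rightarrow> bool) \<Rightarrow> real" where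
  "cprob p A B = measure_pmf.prob p {z. A z \<and> B z} / measure_pmf.prob p {z. B z}"

definition pstar :: "('x \<Rightarrow> cdist) \<Rightarrow> 'x \<Rightarrow> real" where
  "pstar D x = measure_pmf.prob (D x) {z. fst z}"

definition pstarW :: "('x \<Rightarrow> cdist) \<Rightarrow> 'x \<Rightarrow> real \<Rightarrow> real" where
  "pstarW D x w = cprob (D x) (\<lambda>z. fst z) (\<lambda>z. snd (snd z) = w)"

definition pW :: "('x \<Rightarrow> cdist) \<Rightarrow> 'x \<Rightarrow> real \<Rightarrow> real" where
  "pW D x w = cprob (D x) (\<lambda>z. fst (snd z)) (\<lambda>z. snd (snd z) = w)"

definition misrep :: "('x \<Rightarrow> cdist) \<Rightarrow> 'x \<Rightarrow> real \<Rightarrow> bool \<Rightarrow> real" where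
  "misrep D x w y = cprob (D x) (\<lambda>z. fst (snd z) = (\<not> y)) (\<lambda>z. fst z = y \<and> snd (snd z) = w)"

definition observed :: "('x \<Rightarrow> cdist) \<Rightarrow> 'x \<Rightarrow> (bool \<times> real) pmf" where
  "observed D x = map_pmf snd (D x)"

definition pW_low :: "real set \<Rightarrow> ('x \<Rightarrow> cdist) \<Rightarrow> 'x \<Rightarrow> real \<Rightarrow> real" where
  "pW_low WW D x w = Inf {pW D x w' | w'. w' \<in> WW \<and> w' \<le> w}"

definition pW_up :: "real set \<Rightarrow> ('x \<Rightarrow> cdist) \<Rightarrow> 'x \<Rightarrow> real \<Rightarrow> real" where
  "pW_up WW D x w = Sup {pW D x w' | w'. w' \<in> WW \<and> w' \<le> w}"

definition L2 :: "real set \<Rightarrow> ('x \<Rightarrow> cdist) \<Rightarrow> 'x \<Rightarrow> real" where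
  "L2 WW D x = Sup ((\<lambda>w. (pW D x w - pW_low WW D x w) / (1 - pW_low WW D x w)) ` WW)"

definition U2 :: "real set \<Rightarrow> ('x \<Rightarrow> cdist) \<Rightarrow> 'x \<Rightarrow> real" where
  "U2 WW D x = Inf ((\<lambda>w. pW D x w / pW_up WW D x w) ` WW)"

text \<open>W takes values in WW and every w in WW has positive conditional probability
  (so that conditioning on W = w is meaningful).\<close>
definition W_support :: "real set \<Rightarrow> 'x set \<Rightarrow> ('x \<Rightarrow> cdist) \<Rightarrow> bool" where
  "W_support WW XX D \<longleftrightarrow> (\<forall>x\<in>XX. (\<forall>z\<in>set_pmf (D x). snd (snd z) \<in> WW) \<and>
      (\<forall>w\<in>WW. measure_pmf.prob (D x) {z. snd (snd z) = w} > 0))"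

definition exclusion :: "real set \<Rightarrow> 'x set \<Rightarrow> ('x \<Rightarrow> cdist) \<Rightarrow> bool" where
  "exclusion WW XX D \<longleftrightarrow> (\<forall>x\<in>XX. \<forall>w\<in>WW. pstarW D x w = pstar D x)"

definition monotonicity :: "real set \<Rightarrow> 'x set \<Rightarrow> ('x \<Rightarrow> cdist) \<Rightarrow> bool" where
  "monotonicity WW XX D \<longleftrightarrow> (\<forall>x\<in>XX. \<forall>y. \<forall>w1\<in>WW. \<forall>w2\<in>WW.
      w1 > w2 \<longrightarrow> misrep D x w1 y \<le> misrep D x w2 y)"

definition degree_misrep :: "real set \<Rightarrow> 'x set \<Rightarrow> ('x \<Rightarrow> cdist) \<Rightarrow> bool" where
  "degree_misrep WW XX D \<longleftrightarrow> (\<forall>x\<in>XX. \<forall>w\<in>WW. misrep D x w False + misrep D x w True \<le> 1)"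

definition boundary :: "real set \<Rightarrow> 'x set \<Rightarrow> ('x \<Rightarrow> cdist) \<Rightarrow> bool" where
  "boundary WW XX D \<longleftrightarrow> (\<forall>x\<in>XX. \<forall>w\<in>WW. 0 < pW D x w \<and> pW D x w < 1)"

definition model :: "real set \<Rightarrow> 'x set \<Rightarrow> ('x \<Rightarrow> cdist) \<Rightarrow> bool" where
  "model WW XX D \<longleftrightarrow> W_support WW XX D \<and> exclusion WW XX D \<and> monotonicity WW XX D
      \<and> degree_misrep WW XX D \<and> boundary WW XX D"

end

theory Submission
  imports Defs
begin

(*
  Given Y*, the observed outcome is a two-point mixture: writing r = p*(x),
    p_W(x,w) = (1 - b_w) r + a_w (1 - r),
  with a_w = Pr(Y = 1 | Y* = 0, x, w) and b_w = Pr(Y = 0 | Y* = 1, x, w).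
  For w' <= w, monotonicity gives a_w <= a_w' and b_w <= b_w', which together
  with a_w' + b_w' <= 1 yields
    r p_W(x,w') <= p_W(x,w) <= r + (1 - r) p_W(x,w');
  taking for w' the point where the running minimum (maximum) of p_W is
  attained gives L2 <= r <= U2.

  For sharpness with W = {w1 < w2} and c in [L2, U2], keep the observed law of
  (Y, W) and redraw Y* given (Y, W) so that Pr(Y* = 1, Y = 1 | w) = v_w, where
  v_w1 = c p_W(w1), i.e. Y* is independent of Y at w1, and
  v_w2 = v_w1 + max 0 (p_W(w2) - p_W(w1)).  Then Pr(Y* = 1 | w) = c for both w,
  and the induced misreporting rates (c - v_w)/c and (p_W(w) - v_w)/(1 - c) are
  monotone in w and sum to at most one by construction; the inequalities
  L2 <= c <= U2 are exactly what makes all cell probabilities nonnegative.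
*)

lemma prob_split:
  fixes p :: "'a pmf"
  shows "measure_pmf.prob p {z. B z}
    = measure_pmf.prob p {z. A z \<and> B z} + measure_pmf.prob p {z. \<not> A z \<and> B z}"
proof -
  have "{z. B z} = {z. A z \<and> B z} \<union> {z. \<not> A z \<and> B z}" by auto
  then show ?thesis by (simp add: measure_pmf.finite_measure_Union disjoint_iff)
qed

lemma prob_conj_eq_cprob_mult:
  "measure_pmf.prob p {z. A z \<and> B z} = cprob p A B * measure_pmf.prob p {z. B z}"
proof (cases "measure_pmf.prob p {z. B z} = 0")
  case True
  then show ?thesis
    using measure_pmf.finite_measure_mono[of "{z. A z \<and> B z}" "{z. B z}" p]
    by (simp add: subset_iff measure_nonneg order_antisym)
qed (simp add: cprob_def)

lemma cprob_nonneg: "0 \<le> cprob p A B"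
  unfolding cprob_def by simp

lemma cprob_split: "cprob p A B = cprob p (\<lambda>z. A z \<and> S z) B + cprob p (\<lambda>z. A z \<and> \<not> S z) B"
  unfolding cprob_def using prob_split[of p "\<lambda>z. A z \<and> B z" S]
  by (simp add: add_divide_distrib conj_ac)

lemma cprob_compl:
  assumes "measure_pmf.prob p {z. B z} \<noteq> 0"
  shows "cprob p (\<lambda>z. \<not> A z) B = 1 - cprob p A B"
  using assms prob_split[of p B A] unfolding cprob_def by (simp add: field_simps)

lemma cprob_chain: "cprob p A (\<lambda>z. S z \<and> B z) * cprob p S B = cprob p (\<lambda>z. A z \<and> S z) B"
  using prob_conj_eq_cprob_mult[of p A "\<lambda>z. S z \<and> B z"]
  unfolding cprob_def[of p S] cprob_def[of p "\<lambda>z. A z \<and> S z"] by (simp add: conj_assoc)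

lemma cprob_mixture:
  assumes "measure_pmf.prob p {z. B z} \<noteq> 0"
  shows "cprob p A B = (1 - cprob p (\<lambda>z. \<not> A z) (\<lambda>z. S z \<and> B z)) * cprob p S B
    + cprob p A (\<lambda>z. \<not> S z \<and> B z) * (1 - cprob p S B)"
proof -
  have "(1 - cprob p (\<lambda>z. \<not> A z) (\<lambda>z. S z \<and> B z)) * cprob p S B
      = cprob p S B - cprob p (\<lambda>z. \<not> A z \<and> S z) B"
    using cprob_chain[of p "\<lambda>z. \<not> A z" S B] by (simp add: algebra_simps)
  also have "\<dots> = cprob p (\<lambda>z. A z \<and> S z) B"
    using cprob_split[of p S B A] by (simp add: conj_commute)
  finally show ?thesis
    using cprob_chain[of p A "\<lambda>z. \<not> S z" B] cprob_compl[OF assms, of S] cprob_split[of p A B S]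
    by simp
qed

lemma prob_sum_partition:
  fixes p :: "'a pmf" and g :: "'a \<Rightarrow> 'b"
  assumes "finite W" "\<forall>z\<in>set_pmf p. g z \<in> W"
  shows "measure_pmf.prob p {z. A z} = (\<Sum>w\<in>W. measure_pmf.prob p {z. A z \<and> g z = w})"
proof -
  have "measure_pmf.prob p {z. A z} = measure_pmf.prob p ({z. A z} \<inter> set_pmf p)"
    by (rule measure_Int_set_pmf[symmetric])
  also have "{z. A z} \<inter> set_pmf p = (\<Union>w\<in>W. {z. A z \<and> g z = w}) \<inter> set_pmf p"
    using assms(2) by blast
  also have "measure_pmf.prob p \<dots> = measure_pmf.prob p (\<Union>w\<in>W. {z. A z \<and> g z = w})"
    by (rule measure_Int_set_pmf)
  also have "\<dots> = (\<Sum>w\<in>W. measure_pmf.prob p {z. A z \<and> g z = w})"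
    by (rule measure_pmf.finite_measure_finite_Union) (auto simp: assms(1) disjoint_family_on_def)
  finally show ?thesis .
qed

lemma prob_eq_if_cprob_const:
  fixes p :: "'a pmf" and g :: "'a \<Rightarrow> 'b"
  assumes "finite W" "\<forall>z\<in>set_pmf p. g z \<in> W" "\<forall>w\<in>W. cprob p A (\<lambda>z. g z = w) = c"
  shows "measure_pmf.prob p {z. A z} = c"
proof -
  have "measure_pmf.prob p {z. A z} = (\<Sum>w\<in>W. c * measure_pmf.prob p {z. g z = w})"
    using prob_sum_partition[OF assms(1,2), of A] assms(3) prob_conj_eq_cprob_mult[of p A]
    by simp
  also have "\<dots> = c * measure_pmf.prob p {z. True}"
    using prob_sum_partition[OF assms(1,2), of "\<lambda>_. True"] by (simp add: sum_distrib_left[symmetric])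
  finally show ?thesis by simp
qed

lemma prob_eq_if_map_pmf_eq:
  assumes "map_pmf f p = map_pmf f p'"
  shows "measure_pmf.prob p {z. R (f z)} = measure_pmf.prob p' {z. R (f z)}"
  using arg_cong[OF assms, of "\<lambda>q. measure_pmf.prob q {y. R y}"] by (simp add: vimage_def)

lemma pW_mixture:
  assumes "W_support WW XX D" "exclusion WW XX D" "x \<in> XX" "w \<in> WW"
  shows "pW D x w = (1 - misrep D x w True) * pstar D x + misrep D x w False * (1 - pstar D x)"
proof -
  have "measure_pmf.prob (D x) {z. snd (snd z) = w} \<noteq> 0"
    using assms unfolding W_support_def by fastforce
  moreover have "pstarW D x w = pstar D x"
    using assms unfolding exclusion_def by blast
  ultimately show ?thesis
    using cprob_mixture[of "D x" "\<lambda>z. snd (snd z) = w" "\<lambda>z. fst (snd z)" fst]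
    unfolding pW_def misrep_def pstarW_def by simp
qed

lemma mixture_bounds:
  fixes a b a' b' p :: real
  assumes "0 \<le> p" "p \<le> 1" "0 \<le> a" "0 \<le> b" "a \<le> a'" "b \<le> b'" "a' + b' \<le> 1"
  defines "q \<equiv> (1 - b) * p + a * (1 - p)" and "q' \<equiv> (1 - b') * p + a' * (1 - p)"
  shows "p * q' \<le> q" "q \<le> p + (1 - p) * q'"
proof -
  have "q - p * q' = p * (b' - b) + a * (1 - p) + p * (1 - p) * (1 - a' - b')"
    unfolding q_def q'_def by (simp add: algebra_simps)
  moreover have "0 \<le> p * (b' - b) + a * (1 - p) + p * (1 - p) * (1 - a' - b')"
    using assms by simp
  ultimately show "p * q' \<le> q" by linarith
  have "p + (1 - p) * q' - q = p * b + (1 - p) * (a' - a) + (1 - p) * p * (1 - a' - b')"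
    unfolding q_def q'_def by (simp add: algebra_simps)
  moreover have "0 \<le> p * b + (1 - p) * (a' - a) + (1 - p) * p * (1 - a' - b')"
    using assms by simp
  ultimately show "q \<le> p + (1 - p) * q'" by linarith
qed

lemma pW_bounds:
  assumes "model WW XX D" "x \<in> XX" "w \<in> WW" "w' \<in> WW" "w' \<le> w"
  shows "pstar D x * pW D x w' \<le> pW D x w" "pW D x w \<le> pstar D x + (1 - pstar D x) * pW D x w'"
proof -
  have M: "W_support WW XX D" "exclusion WW XX D" "monotonicity WW XX D" "degree_misrep WW XX D"
    using assms(1) unfolding model_def by auto
  have mono: "misrep D x w y \<le> misrep D x w' y" for y
    using M(3) assms(2-5) unfolding monotonicity_def by (cases "w' = w") auto
  have nonneg: "0 \<le> misrep D x w y" for y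
    unfolding misrep_def by (rule cprob_nonneg)
  have deg: "misrep D x w' False + misrep D x w' True \<le> 1"
    using M(4) assms(2,4) unfolding degree_misrep_def by blast
  have p01: "0 \<le> pstar D x" "pstar D x \<le> 1"
    unfolding pstar_def by auto
  show "pstar D x * pW D x w' \<le> pW D x w" "pW D x w \<le> pstar D x + (1 - pstar D x) * pW D x w'"
    unfolding pW_mixture[OF M(1,2) assms(2,3)] pW_mixture[OF M(1,2) assms(2,4)]
    by (rule mixture_bounds[OF p01 nonneg nonneg mono[of False] mono[of True] deg])+
qed

lemma pW_in_open_unit_interval:
  assumes "model WW XX D" "x \<in> XX" "w \<in> WW"
  shows "0 < pW D x w" "pW D x w < 1"
  using assms unfolding model_def boundary_def by simp_all

lemma finite_Inf_image_attained:
  fixes f :: "'a \<Rightarrow> 'b::conditionally_complete_linorder"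
  assumes "finite A" "A \<noteq> {}"
  shows "\<exists>a\<in>A. Inf (f ` A) = f a"
proof -
  have "Inf (f ` A) = Min (f ` A)" "Min (f ` A) \<in> f ` A"
    using assms by (simp_all add: cInf_eq_Min)
  then show ?thesis by auto
qed

lemma finite_Sup_image_attained:
  fixes f :: "'a \<Rightarrow> 'b::conditionally_complete_linorder"
  assumes "finite A" "A \<noteq> {}"
  shows "\<exists>a\<in>A. Sup (f ` A) = f a"
proof -
  have "Sup (f ` A) = Max (f ` A)" "Max (f ` A) \<in> f ` A"
    using assms by (simp_all add: cSup_eq_Max)
  then show ?thesis by auto
qed

lemma pW_low_attained:
  assumes "finite WW" "w \<in> WW"
  obtains w' where "w' \<in> WW" "w' \<le> w" "pW_low WW D x w = pW D x w'"
proof -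
  have "pW_low WW D x w = Inf (pW D x ` {w'\<in>WW. w' \<le> w})"
    unfolding pW_low_def by (rule arg_cong[where f = Inf]) auto
  moreover obtain w' where "w' \<in> WW" "w' \<le> w" "Inf (pW D x ` {w'\<in>WW. w' \<le> w}) = pW D x w'"
    using finite_Inf_image_attained[of "{w'\<in>WW. w' \<le> w}" "pW D x"] assms by auto
  ultimately show ?thesis using that by simp
qed

lemma pW_up_attained:
  assumes "finite WW" "w \<in> WW"
  obtains w' where "w' \<in> WW" "w' \<le> w" "pW_up WW D x w = pW D x w'"
proof -
  have "pW_up WW D x w = Sup (pW D x ` {w'\<in>WW. w' \<le> w})"
    unfolding pW_up_def by (rule arg_cong[where f = Sup]) auto
  moreover obtain w' where "w' \<in> WW" "w' \<le> w" "Sup (pW D x ` {w'\<in>WW. w' \<le> w}) = pW D x w'"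
    using finite_Sup_image_attained[of "{w'\<in>WW. w' \<le> w}" "pW D x"] assms by auto
  ultimately show ?thesis using that by simp
qed

lemma L2_le_pstar:
  assumes "finite WW" "WW \<noteq> {}" "model WW XX D" "x \<in> XX"
  shows "L2 WW D x \<le> pstar D x"
  unfolding L2_def
proof (rule cSUP_least[OF assms(2)])
  fix w assume w: "w \<in> WW"
  obtain w' where w': "w' \<in> WW" "w' \<le> w" "pW_low WW D x w = pW D x w'"
    using pW_low_attained[OF assms(1) w] .
  have "pW D x w' < 1"
    using pW_in_open_unit_interval[OF assms(3,4) w'(1)] by simp
  then show "(pW D x w - pW_low WW D x w) / (1 - pW_low WW D x w) \<le> pstar D x"
    using pW_bounds(2)[OF assms(3,4) w w'(1,2)]
    unfolding w'(3) by (simp add: divide_le_eq algebra_simps)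
qed

lemma pstar_le_U2:
  assumes "finite WW" "WW \<noteq> {}" "model WW XX D" "x \<in> XX"
  shows "pstar D x \<le> U2 WW D x"
  unfolding U2_def
proof (rule cINF_greatest[OF assms(2)])
  fix w assume w: "w \<in> WW"
  obtain w' where w': "w' \<in> WW" "w' \<le> w" "pW_up WW D x w = pW D x w'"
    using pW_up_attained[OF assms(1) w] .
  have "0 < pW D x w'"
    using pW_in_open_unit_interval[OF assms(3,4) w'(1)] by simp
  then show "pstar D x \<le> pW D x w / pW_up WW D x w"
    using pW_bounds(1)[OF assms(3,4) w w'(1,2)]
    unfolding w'(3) by (simp add: le_divide_eq algebra_simps)
qed

lemma prob_latent_and_W:
  fixes P :: cdist
  shows "measure_pmf.prob P {z. fst z = s \<and> snd (snd z) = w} = pmf P (s, True, w) + pmf P (s, False, w)"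
proof -
  have "{z. fst z = s \<and> snd (snd z) = w} = {(s, True, w), (s, False, w)}" by auto
  then show ?thesis by (simp add: measure_measure_pmf_finite)
qed

lemma pmf_observed:
  "pmf (observed D x) (True, w) = pW D x w * measure_pmf.prob (D x) {z. snd (snd z) = w}"
  "pmf (observed D x) (False, w) = (1 - pW D x w) * measure_pmf.prob (D x) {z. snd (snd z) = w}"
proof -
  have obs: "pmf (observed D x) (t, w) = measure_pmf.prob (D x) {z. fst (snd z) = t \<and> snd (snd z) = w}"
    for t
    unfolding observed_def pmf_map by (rule arg_cong[where f = "measure_pmf.prob (D x)"]) auto
  have "measure_pmf.prob (D x) {z. fst (snd z) \<and> snd (snd z) = w}
      = pW D x w * measure_pmf.prob (D x) {z. snd (snd z) = w}"
    unfolding pW_def by (rule prob_conj_eq_cprob_mult)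
  then show "pmf (observed D x) (True, w) = pW D x w * measure_pmf.prob (D x) {z. snd (snd z) = w}"
    "pmf (observed D x) (False, w) = (1 - pW D x w) * measure_pmf.prob (D x) {z. snd (snd z) = w}"
    using obs prob_split[of "D x" "\<lambda>z. snd (snd z) = w" "\<lambda>z. fst (snd z)"]
    by (simp_all add: algebra_simps)
qed

lemma conditionals_from_cells:
  assumes r: "measure_pmf.prob (D x) {z. snd (snd z) = w} = r" "r \<noteq> 0"
    and cells: "pmf (D x) (True, True, w) = r * v" "pmf (D x) (True, False, w) = r * (c - v)"
      "pmf (D x) (False, True, w) = r * (q - v)"
  shows "pstarW D x w = c" "misrep D x w True = (c - v) / c" "misrep D x w False = (q - v) / (1 - c)"
proof -
  have latent1: "measure_pmf.prob (D x) {z. fst z \<and> snd (snd z) = w} = r * c"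
    using prob_latent_and_W[of "D x" True w] cells by (simp add: algebra_simps)
  moreover have "measure_pmf.prob (D x) {z. \<not> fst z \<and> snd (snd z) = w} = r * (1 - c)"
    using prob_split[of "D x" "\<lambda>z. snd (snd z) = w" fst] r latent1 by (simp add: algebra_simps)
  moreover have "{z. \<not> fst (snd z) \<and> fst z \<and> snd (snd z) = w} = {(True, False, w)}"
    "{z. fst (snd z) \<and> \<not> fst z \<and> snd (snd z) = w} = {(False, True, w)}"
    by auto
  ultimately show "pstarW D x w = c" "misrep D x w True = (c - v) / c"
    "misrep D x w False = (q - v) / (1 - c)"
    using r cells unfolding pstarW_def misrep_def cprob_def by (simp_all add: measure_pmf_single)
qed

definition impute_latent :: "(bool \<times> real) pmf \<Rightarrow> (bool \<times> real \<Rightarrow> real) \<Rightarrow> cdist" where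
  "impute_latent N \<theta> = bind_pmf N (\<lambda>yw. map_pmf (\<lambda>s. (s, yw)) (bernoulli_pmf (\<theta> yw)))"

lemma map_snd_impute_latent: "map_pmf snd (impute_latent N \<theta>) = N"
  unfolding impute_latent_def by (simp add: map_bind_pmf map_pmf_comp o_def bind_return_pmf')

lemma pmf_impute_latent:
  "pmf (impute_latent N \<theta>) (s, yw) = pmf N yw * pmf (bernoulli_pmf (\<theta> yw)) s"
proof -
  have "pmf (map_pmf (\<lambda>s. (s, yw')) (bernoulli_pmf (\<theta> yw'))) (s, yw)
      = (if yw' = yw then pmf (bernoulli_pmf (\<theta> yw)) s else 0)" for yw'
  proof -
    have "(\<lambda>s. (s, yw')) -` {(s, yw)} = (if yw' = yw then {s} else {})" by auto
    then show ?thesis by (simp add: pmf_map measure_pmf_single)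
  qed
  then have "pmf (impute_latent N \<theta>) (s, yw)
      = (\<integral>yw'. (if yw' = yw then pmf (bernoulli_pmf (\<theta> yw)) s else 0) \<partial>measure_pmf N)"
    unfolding impute_latent_def pmf_bind by simp
  also have "\<dots> = (\<Sum>yw'\<in>{yw}. (if yw' = yw then pmf (bernoulli_pmf (\<theta> yw)) s else 0) * pmf N yw')"
    by (rule integral_measure_pmf_real) (auto split: if_splits)
  finally show ?thesis by simp
qed

(* Pr(Y* = 1 | Y = y, W = w) for a target cell Pr(Y* = 1, Y = 1 | W = w) = v w,
   given c = Pr(Y* = 1 | W = w) and q w = Pr(Y = 1 | W = w). *)
definition latent_given_observed :: "real \<Rightarrow> (real \<Rightarrow> real) \<Rightarrow> (real \<Rightarrow> real) \<Rightarrow> bool \<times> real \<Rightarrow> real" where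
  "latent_given_observed c q v = (\<lambda>(y, w). if y then v w / q w else (c - v w) / (1 - q w))"

lemma cells_impute_latent:
  fixes D :: "'x \<Rightarrow> cdist" and x :: 'x and c w :: real and v :: "real \<Rightarrow> real"
  defines "P \<equiv> impute_latent (observed D x) (latent_given_observed c (pW D x) v)"
    and "r \<equiv> measure_pmf.prob (D x) {z. snd (snd z) = w}"
  assumes q: "0 < pW D x w" "pW D x w < 1" and c: "0 \<le> c" "c \<le> 1"
    and v: "c * pW D x w \<le> v w" "v w \<le> pW D x w" "v w \<le> c"
  shows "pmf P (True, True, w) = r * v w" "pmf P (True, False, w) = r * (c - v w)"
    "pmf P (False, True, w) = r * (pW D x w - v w)"
proof -
  let ?q = "pW D x w"
  have "0 \<le> c * ?q"
    using q c by simp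
  then have "0 \<le> v w / ?q" "v w / ?q \<le> 1"
    using q v by simp_all
  moreover have "c * (1 - ?q) \<le> 1 - ?q"
    using q c by (intro mult_left_le_one_le) simp_all
  then have "c - v w \<le> 1 - ?q"
    using v(1) by (simp add: algebra_simps)
  then have "0 \<le> (c - v w) / (1 - ?q)" "(c - v w) / (1 - ?q) \<le> 1"
    using q v by simp_all
  ultimately show "pmf P (True, True, w) = r * v w" "pmf P (True, False, w) = r * (c - v w)"
    "pmf P (False, True, w) = r * (pW D x w - v w)"
    using q unfolding P_def r_def pmf_impute_latent pmf_observed latent_given_observed_def
    by (simp_all add: field_simps)
qed

lemma conditionals_impute_latent:
  fixes D :: "'x \<Rightarrow> cdist" and x :: 'x and c w :: real and v :: "real \<Rightarrow> real"
  defines "P \<equiv> impute_latent (observed D x) (latent_given_observed c (pW D x) v)"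
  assumes W_pos: "measure_pmf.prob (D x) {z. snd (snd z) = w} \<noteq> 0"
    and q: "0 < pW D x w" "pW D x w < 1" and c: "0 \<le> c" "c \<le> 1"
    and v: "c * pW D x w \<le> v w" "v w \<le> pW D x w" "v w \<le> c"
  shows "pstarW (\<lambda>_. P) x w = c" "misrep (\<lambda>_. P) x w True = (c - v w) / c"
    "misrep (\<lambda>_. P) x w False = (pW D x w - v w) / (1 - c)"
proof -
  have "map_pmf snd P = map_pmf snd (D x)"
    unfolding P_def map_snd_impute_latent observed_def ..
  then have W_eq: "measure_pmf.prob P {z. snd (snd z) = w} = measure_pmf.prob (D x) {z. snd (snd z) = w}"
    using prob_eq_if_map_pmf_eq[of snd P "D x" "\<lambda>yw. snd yw = w"] by simp
  show "pstarW (\<lambda>_. P) x w = c" "misrep (\<lambda>_. P) x w True = (c - v w) / c"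
    "misrep (\<lambda>_. P) x w False = (pW D x w - v w) / (1 - c)"
    by (rule conditionals_from_cells[where D = "\<lambda>_. P" and x = x and w = w and v = "v w" and c = c
          and q = "pW D x w", OF W_eq W_pos cells_impute_latent[of D x w c v, OF q c v, folded P_def]])+
qed

lemma misreport_rates_le:
  fixes q c v :: real
  assumes "0 \<le> q" "q \<le> 1" "0 \<le> c" "c \<le> 1" "c * q \<le> v"
  shows "(q - v) / (1 - c) \<le> q" "(c - v) / c \<le> 1 - q"
proof -
  show "(q - v) / (1 - c) \<le> q"
    using assms by (cases "c = 1") (simp_all add: divide_le_eq algebra_simps)
  show "(c - v) / c \<le> 1 - q"
  proof (cases "c = 0")
    case False
    then have "0 < c"
      using assms(3) by simp
    moreover have "c - v \<le> (1 - q) * c"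
      using assms(5) by (simp add: algebra_simps)
    ultimately show ?thesis
      by (subst pos_divide_le_eq)
  qed (use assms in simp)
qed

lemma pW_eq_if_observed_eq:
  assumes "observed D' x = observed D x"
  shows "pW D' x w = pW D x w"
  using prob_eq_if_map_pmf_eq[OF assms[unfolded observed_def], of "\<lambda>yw. fst yw \<and> snd yw = w"]
    prob_eq_if_map_pmf_eq[OF assms[unfolded observed_def], of "\<lambda>yw. snd yw = w"]
  unfolding pW_def cprob_def by simp

lemma W_support_if_observed_eq:
  assumes "observed D' x = observed D x" "W_support WW {x} D"
  shows "W_support WW {x} D'"
proof -
  have supp: "\<forall>z\<in>set_pmf (D x). snd (snd z) \<in> WW"
    and pos: "\<forall>w\<in>WW. 0 < measure_pmf.prob (D x) {z. snd (snd z) = w}"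
    using assms(2) unfolding W_support_def by simp_all
  have "snd ` set_pmf (D' x) = snd ` set_pmf (D x)"
    using arg_cong[OF assms(1), of set_pmf] unfolding observed_def by simp
  then have "\<forall>z\<in>set_pmf (D' x). snd (snd z) \<in> WW"
    using supp by (metis image_iff)
  moreover have "measure_pmf.prob (D' x) {z. snd (snd z) = w} = measure_pmf.prob (D x) {z. snd (snd z) = w}" for w
    using prob_eq_if_map_pmf_eq[OF assms(1)[unfolded observed_def], of "\<lambda>yw. snd yw = w"] by simp
  ultimately show ?thesis
    using pos unfolding W_support_def by simp
qed

lemma exists_latent_model:
  fixes D :: "'x \<Rightarrow> cdist" and x :: 'x and c :: real and v :: "real \<Rightarrow> real"
  assumes fin: "finite WW" and supp: "W_support WW {x} D" and bd: "boundary WW {x} D"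
    and c: "0 \<le> c" "c \<le> 1"
    and feasible: "\<And>w. w \<in> WW \<Longrightarrow> c * pW D x w \<le> v w"
      "\<And>w. w \<in> WW \<Longrightarrow> v w \<le> pW D x w" "\<And>w. w \<in> WW \<Longrightarrow> v w \<le> c"
    and mono: "\<And>w w'. w \<in> WW \<Longrightarrow> w' \<in> WW \<Longrightarrow> w' < w \<Longrightarrow> v w' \<le> v w"
      "\<And>w w'. w \<in> WW \<Longrightarrow> w' \<in> WW \<Longrightarrow> w' < w \<Longrightarrow> pW D x w - v w \<le> pW D x w' - v w'"
  shows "\<exists>P. model WW {x} (\<lambda>_. P) \<and> map_pmf snd P = observed D x \<and> measure_pmf.prob P {z. fst z} = c"
proof -
  define P where "P = impute_latent (observed D x) (latent_given_observed c (pW D x) v)"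
  have obs: "observed (\<lambda>_. P) x = observed D x"
    unfolding P_def observed_def[of "\<lambda>_. _"] by (simp add: map_snd_impute_latent)
  have supp': "W_support WW {x} (\<lambda>_. P)"
    by (rule W_support_if_observed_eq[OF obs supp])
  have W_pos: "measure_pmf.prob (D x) {z. snd (snd z) = w} \<noteq> 0" if "w \<in> WW" for w
    using supp that unfolding W_support_def by fastforce
  have q: "0 < pW D x w" "pW D x w < 1" if "w \<in> WW" for w
    using bd that unfolding boundary_def by simp_all
  have cond: "pstarW (\<lambda>_. P) x w = c" "misrep (\<lambda>_. P) x w True = (c - v w) / c"
      "misrep (\<lambda>_. P) x w False = (pW D x w - v w) / (1 - c)" if "w \<in> WW" for w
    unfolding P_def
    by (rule conditionals_impute_latent[where D = D and x = x and w = w and c = c and v = v,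
          OF W_pos[OF that] q[OF that] c feasible(1-3)[OF that]])+
  have pstar: "pstar (\<lambda>_. P) x = c"
    using prob_eq_if_cprob_const[OF fin, of P "\<lambda>z. snd (snd z)" fst c] supp' cond(1)
    unfolding W_support_def pstar_def pstarW_def by simp
  have "model WW {x} (\<lambda>_. P)"
    unfolding model_def
  proof (intro conjI)
    show "exclusion WW {x} (\<lambda>_. P)"
      using cond(1) pstar unfolding exclusion_def by simp
    show "boundary WW {x} (\<lambda>_. P)"
      using bd pW_eq_if_observed_eq[OF obs] unfolding boundary_def by simp
    show "degree_misrep WW {x} (\<lambda>_. P)"
      unfolding degree_misrep_def
    proof (intro ballI)
      fix x' w assume "x' \<in> {x}" "w \<in> WW"
      then show "misrep (\<lambda>_. P) x' w False + misrep (\<lambda>_. P) x' w True \<le> 1"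
        using misreport_rates_le[of "pW D x w" c "v w"] q[of w] c feasible(1)[of w] cond(2,3)[of w]
        by simp
    qed
    show "monotonicity WW {x} (\<lambda>_. P)"
      unfolding monotonicity_def
    proof (intro ballI allI impI)
      fix x' y w w' assume "x' \<in> {x}" and w: "w \<in> WW" "w' \<in> WW" "w' < w"
      have "(c - v w) / c \<le> (c - v w') / c"
        using mono(1)[OF w] c by (intro divide_right_mono) simp_all
      moreover have "(pW D x w - v w) / (1 - c) \<le> (pW D x w' - v w') / (1 - c)"
        using mono(2)[OF w] c by (intro divide_right_mono) simp_all
      ultimately show "misrep (\<lambda>_. P) x' w y \<le> misrep (\<lambda>_. P) x' w' y"
        using \<open>x' \<in> {x}\<close> cond[OF w(1)] cond[OF w(2)] by (cases y) simp_all
    qed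
  qed (rule supp')
  then show ?thesis
    using obs pstar unfolding observed_def pstar_def by auto
qed

lemma model_pointwise: "model WW XX D \<longleftrightarrow> (\<forall>x\<in>XX. model WW {x} (\<lambda>_. D x))"
  unfolding model_def W_support_def exclusion_def monotonicity_def degree_misrep_def boundary_def
    pstar_def pstarW_def pW_def misrep_def
  by blast

lemma model_fun_upd:
  assumes "model WW XX D" "model WW {x} (\<lambda>_. P)"
  shows "model WW XX (D(x := P))"
  using assms unfolding model_pointwise[of WW XX] by simp

lemma L2_U2_binary:
  assumes W: "WW = {w1, w2}" "w1 < w2" and q1: "0 < pW D x w1" "pW D x w1 < 1"
  shows "L2 WW D x = max 0 ((pW D x w2 - pW D x w1) / (1 - pW D x w1))"
    "U2 WW D x = min 1 (pW D x w2 / pW D x w1)"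
proof -
  let ?q1 = "pW D x w1" and ?q2 = "pW D x w2"
  have below1: "{pW D x w' | w'. w' \<in> WW \<and> w' \<le> w1} = {?q1}"
    and below2: "{pW D x w' | w'. w' \<in> WW \<and> w' \<le> w2} = {?q1, ?q2}"
    using W by auto
  have "pW_low WW D x w1 = ?q1" "pW_low WW D x w2 = min ?q1 ?q2"
    "pW_up WW D x w1 = ?q1" "pW_up WW D x w2 = max ?q1 ?q2"
    unfolding pW_low_def pW_up_def below1 below2 by (simp_all add: cInf_eq_Min cSup_eq_Max)
  moreover have "max 0 ((?q2 - min ?q1 ?q2) / (1 - min ?q1 ?q2)) = max 0 ((?q2 - ?q1) / (1 - ?q1))"
    using q1 by (cases "?q1 \<le> ?q2") (simp_all add: min_def divide_nonpos_pos)
  moreover have "min 1 (?q2 / max ?q1 ?q2) = min 1 (?q2 / ?q1)"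
    using q1 by (cases "?q1 \<le> ?q2") (simp_all add: max_def)
  ultimately show "L2 WW D x = max 0 ((?q2 - ?q1) / (1 - ?q1))" "U2 WW D x = min 1 (?q2 / ?q1)"
    using q1 W unfolding L2_def U2_def by (simp_all add: cSup_eq_Max cInf_eq_Min max.commute min.commute)
qed

lemma binary_cells_feasible:
  fixes q1 q2 c :: real
  assumes "0 \<le> q1" "q1 \<le> 1" "0 \<le> c" "c \<le> 1" "q2 - q1 \<le> c * (1 - q1)" "c * q1 \<le> q2"
  defines "v2 \<equiv> c * q1 + max 0 (q2 - q1)"
  shows "c * q1 \<le> q1" "c * q1 \<le> c"
    "c * q2 \<le> v2" "v2 \<le> q2" "v2 \<le> c" "c * q1 \<le> v2" "q2 - v2 \<le> q1 - c * q1"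
proof -
  show cq1: "c * q1 \<le> q1" "c * q1 \<le> c"
    using assms(1-4) by (simp_all add: mult_left_le_one_le mult_right_le_one_le)
  have "c * q2 \<le> c * q1 + max 0 (q2 - q1)"
  proof (cases "q1 \<le> q2")
    case True
    then have "c * (q2 - q1) \<le> q2 - q1"
      using assms(3,4) by (simp add: mult_left_le_one_le)
    then show ?thesis
      using True by (simp add: algebra_simps)
  next
    case False
    then show ?thesis
      using assms(3) mult_left_mono[of q2 q1 c] by simp
  qed
  then show "c * q2 \<le> v2" "v2 \<le> q2" "v2 \<le> c" "c * q1 \<le> v2" "q2 - v2 \<le> q1 - c * q1"
    using cq1 assms(5,6) unfolding v2_def by (simp_all add: max_def algebra_simps)
qed

lemma sharp_bounds_binary:
  assumes M: "model WW XX D" and card: "card WW = 2" and x: "x \<in> XX"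
    and c: "L2 WW D x \<le> c" "c \<le> U2 WW D x"
  shows "\<exists>D'. model WW XX D' \<and> (\<forall>x'\<in>XX. observed D' x' = observed D x') \<and> pstar D' x = c"
proof -
  obtain w1 w2 where W: "WW = {w1, w2}" "w1 < w2"
  proof -
    obtain a b where "WW = {a, b}" "a \<noteq> b"
      using card unfolding card_2_iff by blast
    then show ?thesis
      using that[of a b] that[of b a] by (cases "a < b") (simp_all add: insert_commute)
  qed
  let ?q1 = "pW D x w1" and ?q2 = "pW D x w2"
  have q1: "0 < ?q1" "?q1 < 1"
    using pW_in_open_unit_interval[OF M x] W by simp_all
  have "0 \<le> c" "c \<le> 1" "?q2 - ?q1 \<le> c * (1 - ?q1)" "c * ?q1 \<le> ?q2"
    using c q1 unfolding L2_U2_binary[OF W q1] by (simp_all add: pos_divide_le_eq pos_le_divide_eq)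
  note feasible = binary_cells_feasible[OF less_imp_le[OF q1(1)] less_imp_le[OF q1(2)] this]
  define v where "v w = (if w = w2 then c * ?q1 + max 0 (?q2 - ?q1) else c * ?q1)" for w
  have "\<exists>P. model WW {x} (\<lambda>_. P) \<and> map_pmf snd P = observed D x \<and> measure_pmf.prob P {z. fst z} = c"
  proof (rule exists_latent_model)
    show "finite WW" "W_support WW {x} D" "boundary WW {x} D"
      using M x W unfolding model_def W_support_def boundary_def by simp_all
    show "0 \<le> c" "c \<le> 1"
      by fact+
    show "c * pW D x w \<le> v w" "v w \<le> pW D x w" "v w \<le> c" if "w \<in> WW" for w
      using that W feasible unfolding v_def by auto
    show "v w' \<le> v w" "pW D x w - v w \<le> pW D x w' - v w'" if "w \<in> WW" "w' \<in> WW" "w' < w" for w w'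
      using that W feasible unfolding v_def by auto
  qed
  then obtain P where "model WW {x} (\<lambda>_. P)" "map_pmf snd P = observed D x"
    "measure_pmf.prob P {z. fst z} = c"
    by blast
  then show ?thesis
    using model_fun_upd[OF M] unfolding observed_def pstar_def by (intro exI[of _ "D(x := P)"]) auto
qed

theorem proposition2:
  fixes WW :: "real set" and XX :: "'x set" and D :: "'x \<Rightarrow> cdist"
  assumes "finite WW" and "WW \<noteq> {}"
    and "W_support WW XX D"
    and "exclusion WW XX D"
    and "monotonicity WW XX D"
    and "degree_misrep WW XX D"
    and "boundary WW XX D"
  shows "(\<forall>x\<in>XX. L2 WW D x \<le> pstar D x \<and> pstar D x \<le> U2 WW D x)
    \<and> (card WW = 2 \<longrightarrow>
        (\<forall>x\<in>XX. \<forall>c. L2 WW D x \<le> c \<and> c \<le> U2 WW D x \<longrightarrow>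
           (\<exists>D'. model WW XX D' \<and> (\<forall>x'\<in>XX. observed D' x' = observed D x')
                 \<and> pstar D' x = c)))"
proof -
  have M: "model WW XX D"
    unfolding model_def using assms by simp
  then show ?thesis
    using L2_le_pstar[OF assms(1,2) M] pstar_le_U2[OF assms(1,2) M] sharp_bounds_binary[OF M]
    by blast
qed

end
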